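(* For any increment arrays $\underline{t}$ and $\underline{u}$ for $n$ agents, \[\bigcup_{i=1}^{n}\{C(i,\underline{t})\}\cap\bigcup_{i=1}^{n}\{C(i,\underline{u})\}\neq\varnothing\iff\underline{t}\approx\underline{u},\] and \[\bigcup_{i=1}^{n}\{C(i,\underline{t})\}=\bigcup_{i=1}^{n}\{C(i,\underline{u})\}\iff\underline{t}\approx\underline{u}.\]
   Context: Agent identifiers are $\{1,\ldots,n\}$, arithmetic on identifiers is modulo $n$ with representatives in $\{1,\ldots,n\}$ (a value $0$ is replaced by $n$). An increment array (IA) of size $s$ ($1\le s\le n$) for $n$ agents is a tuple $\underline{t}=\langle t_0,\ldots,t_{s-1}\rangle$ of non-negative integers with $\sum t_i=n-s$. Cumulative increments: $\varphi_1=0$, $\varphi_i=\sum_{k=0}^{i-2}(t_k+1)$ for $2\le i\le s+1$. The coalition generated from $x$ is $C(x,\underline{t})=\{x\}\cup\bigcup_{i=2}^{s}\{(x+\varphi_i)\bmod n\}$ (residues in $\{1,\ldots,n\}$). Two IAs are equivalent, $\underline{t}\approx\underline{u}$, if they have the same size $s$ and $\underline{u}$ is a circular shift of $\underline{t}$: there is $0\le k\le s-1$ with $\langle u_0,\ldots,u_{s-1}\rangle=\langle t_k,\ldots,t_{s-1},t_0,\ldots,t_{k-1}\rangle$. *)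

theory Defs
  imports Main
begin

text \<open>Agent identifiers are 1..n; residues modulo n are taken in {1..n}.\<close>
definition res :: "nat \<Rightarrow> nat \<Rightarrow> nat" where
  "res n a = ((a + n - 1) mod n) + 1"

definition is_IA :: "nat \<Rightarrow> nat list \<Rightarrow> bool" where
  "is_IA n t \<longleftrightarrow> 1 \<le> length t \<and> length t \<le> n \<and> sum_list t = n - length t"

definition phi :: "nat list \<Rightarrow> nat \<Rightarrow> nat" where
  "phi t i = (\<Sum>k = 0 ..< i - 1. t ! k + 1)"

definition coalition :: "nat \<Rightarrow> nat \<Rightarrow> nat list \<Rightarrow> nat set" where
  "coalition n x t = {x} \<union> (\<Union>i\<in>{2..length t}. {res n (x + phi t i)})"

definition coalitions :: "nat \<Rightarrow> nat list \<Rightarrow> nat set set" where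
  "coalitions n t = (\<Union>i\<in>{1..n}. {coalition n i t})"

definition IA_equiv :: "nat list \<Rightarrow> nat list \<Rightarrow> bool" where
  "IA_equiv t u \<longleftrightarrow> length t = length u \<and>
     (\<exists>k. k \<le> length t - 1 \<and> u = drop k t @ take k t)"

end

theory Submission
  imports Defs "HOL-Number_Theory.Cong"
begin

text \<open>A coalition \<open>C(x, t)\<close> is the image of the offsets \<open>0 = q\<^sub>0 < \<dots> < q\<^bsub>s-1\<^esub> < n\<close>
  (partial sums of the \<open>t\<^sub>i + 1\<close>) under \<open>q \<mapsto> x + q mod n\<close>. Since \<open>q\<^sub>s = n \<equiv> 0\<close>, taking
  the member \<open>x + q\<^sub>k\<close> as generator turns the array into its \<open>k\<close>-th rotation, so rotated arrays
  generate the same family of coalitions. Conversely, for a fixed generator the coalition determines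
  the sorted offsets and hence the array; as every member of \<open>C(x, t)\<close> can serve as generator,
  a coalition shared by the families of \<open>t\<close> and \<open>u\<close> forces \<open>u\<close> to be a rotation of \<open>t\<close>.\<close>

lemma res_eq_iff: "0 < n \<Longrightarrow> res n a = res n b \<longleftrightarrow> [a = b] (mod n)"
  using cong_add_rcancel_nat[of a "n - 1" b n] by (simp add: res_def cong_def)

lemma cong_res: "0 < n \<Longrightarrow> [res n a = a] (mod n)"
  by (simp add: res_def cong_def mod_Suc_eq)

lemma res_add_res: "0 < n \<Longrightarrow> res n (res n a + b) = res n (a + b)"
  by (simp add: res_eq_iff cong_add cong_res)

lemma res_self:
  assumes "x \<in> {1..n}"
  shows "res n x = x"
proof -
  have shift: "x + n - 1 = (x - 1) + n" and "x - 1 < n"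
    using assms by auto
  then have "(x + n - 1) mod n = x - 1"
    by (simp only: shift mod_add_self2 mod_less)
  then show ?thesis
    using assms by (simp add: res_def)
qed

lemma res_in_range: "0 < n \<Longrightarrow> res n a \<in> {1..n}"
  by (simp add: res_def Suc_leI)

lemma res_shift_image: "0 < n \<Longrightarrow> (\<lambda>x. res n (x + c)) ` {1..n} = {1..n}"
proof (rule endo_inj_surj)
  assume n: "0 < n"
  show "(\<lambda>x. res n (x + c)) ` {1..n} \<subseteq> {1..n}"
    using res_in_range[OF n] by blast
  show "inj_on (\<lambda>x. res n (x + c)) {1..n}"
  proof
    fix x y assume "x \<in> {1..n}" "y \<in> {1..n}" "res n (x + c) = res n (y + c)"
    then show "x = y"
      by (metis n res_eq_iff cong_add_rcancel_nat res_self)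
  qed
qed simp

lemma is_IA_pos: "is_IA n t \<Longrightarrow> 0 < n"
  by (simp add: is_IA_def)

lemma sum_list_rotate: "sum_list (rotate k xs) = sum_list (xs :: 'a :: comm_monoid_add list)"
proof (induction k)
  case (Suc k)
  then show ?case
    by (cases "rotate k xs") (simp_all add: rotate_Suc add.commute)
qed simp

lemma is_IA_rotate [simp]: "is_IA n (rotate k t) \<longleftrightarrow> is_IA n t"
  by (simp add: is_IA_def sum_list_rotate)

definition offset :: "nat list \<Rightarrow> nat \<Rightarrow> nat" where
  "offset t m = sum_list (map Suc (take m t))"

lemma offset_0 [simp]: "offset t 0 = 0"
  by (simp add: offset_def)

lemma offset_Suc: "m < length t \<Longrightarrow> offset t (Suc m) = offset t m + Suc (t ! m)"
  by (simp add: offset_def take_Suc_conv_app_nth)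

lemma offset_Cons_Suc [simp]: "offset (a # t) (Suc m) = Suc a + offset t m"
  by (simp add: offset_def)

lemma offset_append: "m \<le> length t \<Longrightarrow> offset (t @ u) m = offset t m"
  by (simp add: offset_def)

lemma phi_eq_offset: "i \<le> Suc (length t) \<Longrightarrow> phi t i = offset t (i - 1)"
proof -
  have "(\<Sum>k = 0..<m. t ! k + 1) = offset t m" if "m \<le> length t" for m
    using that by (induction m) (simp_all add: offset_Suc)
  then show "i \<le> Suc (length t) \<Longrightarrow> phi t i = offset t (i - 1)"
    by (simp add: phi_def)
qed

lemma offset_length: "is_IA n t \<Longrightarrow> offset t (length t) = n"
proof -
  have "sum_list (map Suc t) = sum_list t + length t"
    by (induction t) simp_all
  then show "is_IA n t \<Longrightarrow> offset t (length t) = n"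
    by (simp add: offset_def is_IA_def)
qed

lemma offset_strict_mono: "m < m' \<Longrightarrow> m' \<le> length t \<Longrightarrow> offset t m < offset t m'"
proof (induction m')
  case (Suc m')
  then show ?case
    by (cases "m = m'") (auto simp: offset_Suc)
qed simp

lemma offset_less: "is_IA n t \<Longrightarrow> m < length t \<Longrightarrow> offset t m < n"
  using offset_strict_mono[of m "length t" t] offset_length by simp

lemma offset_image_eq_imp_eq:
  assumes "offset v ` {..<length v} = offset w ` {..<length w}"
    and "offset v (length v) = offset w (length w)"
  shows "v = w"
proof -
  define offsets where "offsets t = map (offset t) [0..<length t]" for t
  have "sorted_wrt (<) (offsets t)" for t
    by (auto simp: offsets_def sorted_wrt_iff_nth_less offset_strict_mono)
  moreover have "set (offsets t) = offset t ` {..<length t}" for t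
    by (auto simp: offsets_def)
  ultimately have "offsets v = offsets w"
    using assms(1) strict_sorted_equal by metis
  then have len: "length v = length w"
    by (metis offsets_def length_map length_upt diff_zero)
  have "offset v m = offset w m" if "m < length v" for m
    using \<open>offsets v = offsets w\<close> nth_map_upt[of m "length v" 0 "offset v"] that len
    by (simp add: offsets_def)
  then have same: "offset v m = offset w m" if "m \<le> length v" for m
    using that assms(2) len by (cases "m = length v") auto
  show ?thesis
  proof (rule nth_equalityI[OF len])
    fix i assume "i < length v"
    then show "v ! i = w ! i"
      using same[of i] same[of "Suc i"] offset_Suc[of i v] offset_Suc[of i w] len by simp
  qed
qed

lemma coalition_eq_image:
  assumes "x \<in> {1..n}" "t \<noteq> []"
  shows "coalition n x t = (\<lambda>m. res n (x + offset t m)) ` {..<length t}"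
proof -
  have "(\<lambda>i. i - 1) ` {2..length t} = {1..<length t}"
  proof
    show "{1..<length t} \<subseteq> (\<lambda>i. i - 1) ` {2..length t}"
      by (auto intro: image_eqI[of _ _ "Suc _"])
  qed auto
  then have "{..<length t} = insert 0 ((\<lambda>i. i - 1) ` {2..length t})"
    using assms(2) by auto
  then show ?thesis
    using assms by (auto simp: coalition_def phi_eq_offset res_self)
qed

lemma coalition_eq_image_atLeastAtMost:
  assumes "is_IA n t" "x \<in> {1..n}"
  shows "coalition n x t = (\<lambda>m. res n (x + offset t m)) ` {1..length t}"
proof -
  let ?f = "\<lambda>m. res n (x + offset t m)"
  have t: "t \<noteq> []"
    using assms(1) by (auto simp: is_IA_def)
  have wrap: "?f (length t) = ?f 0"
    using assms by (simp add: offset_length res_eq_iff is_IA_pos cong_def)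
  have "?f ` {1..length t} = insert (?f 0) (?f ` {1..length t})"
    using t wrap by (intro insert_absorb[symmetric]) (auto intro!: image_eqI[of _ _ "length t"] simp: Suc_le_eq)
  also have "\<dots> = ?f ` {..length t}"
    by (simp add: atMost_atLeast0 atLeastAtMost_insertL[symmetric])
  also have "\<dots> = insert (?f (length t)) (?f ` {..<length t})"
    by (simp add: lessThan_Suc_atMost[symmetric] lessThan_Suc)
  also have "\<dots> = ?f ` {..<length t}"
    using t wrap by (intro insert_absorb) (auto intro!: image_eqI[of _ _ 0])
  finally show ?thesis
    using coalition_eq_image[OF assms(2) t] by simp
qed

lemma coalition_rotate1:
  assumes "is_IA n t" "x \<in> {1..n}"
  shows "coalition n (res n (x + Suc (hd t))) (rotate1 t) = coalition n x t"
proof -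
  have n: "0 < n"
    using assms(1) by (rule is_IA_pos)
  obtain a w where t: "t = a # w"
    using assms(1) by (cases t) (auto simp: is_IA_def)
  let ?y = "res n (x + Suc a)"
  have "coalition n ?y (w @ [a]) = (\<lambda>m. res n (?y + offset (w @ [a]) m)) ` {..length w}"
    using coalition_eq_image[of ?y n "w @ [a]"] res_in_range[OF n] by (simp add: lessThan_Suc_atMost)
  also have "\<dots> = (\<lambda>m. res n (x + offset (a # w) (Suc m))) ` {..length w}"
    by (intro image_cong) (simp_all add: offset_append res_add_res[OF n] add.assoc)
  also have "\<dots> = (\<lambda>m. res n (x + offset t m)) ` {1..length t}"
  proof -
    have "{1..length t} = Suc ` {..length w}"
      using t image_Suc_atMost by simp
    then show ?thesis
      by (simp only: image_image t)
  qed
  also have "\<dots> = coalition n x t"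
    using coalition_eq_image_atLeastAtMost[OF assms] by simp
  finally show ?thesis
    by (simp add: t)
qed

lemma coalition_rotate:
  assumes "is_IA n t" "x \<in> {1..n}" "k < length t"
  shows "coalition n (res n (x + offset t k)) (rotate k t) = coalition n x t"
  using assms(3)
proof (induction k)
  case (Suc k)
  have n: "0 < n"
    using assms(1) by (rule is_IA_pos)
  let ?y = "res n (x + offset t k)"
  have "rotate k t \<noteq> []"
    using Suc.prems by auto
  then have "hd (rotate k t) = t ! k"
    using Suc.prems by (simp add: hd_conv_nth nth_rotate)
  then have "res n (?y + Suc (hd (rotate k t))) = res n (x + offset t (Suc k))"
    using Suc.prems res_add_res[OF n, of "x + offset t k" "Suc (t ! k)"]
    by (simp add: offset_Suc add.assoc)
  then have "coalition n (res n (x + offset t (Suc k))) (rotate (Suc k) t) = coalition n ?y (rotate k t)"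
    using coalition_rotate1[of n "rotate k t" ?y] assms(1) res_in_range[OF n] by (simp add: rotate_Suc)
  then show ?case
    using Suc by simp
qed (use assms(2) in \<open>simp add: res_self\<close>)

lemma coalitions_eq_image: "coalitions n t = (\<lambda>x. coalition n x t) ` {1..n}"
  by (simp add: coalitions_def UNION_singleton_eq_range)

lemma coalitions_rotate:
  assumes "is_IA n t" "k < length t"
  shows "coalitions n (rotate k t) = coalitions n t"
proof -
  let ?shift = "\<lambda>x. res n (x + offset t k)"
  have "coalitions n (rotate k t) = (\<lambda>y. coalition n y (rotate k t)) ` ?shift ` {1..n}"
    using res_shift_image[OF is_IA_pos[OF assms(1)]] by (simp add: coalitions_eq_image)
  also have "\<dots> = (\<lambda>x. coalition n x t) ` {1..n}"
    unfolding image_image using coalition_rotate[OF assms(1) _ assms(2)] by (rule image_cong[OF refl])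
  finally show ?thesis
    by (simp add: coalitions_eq_image)
qed

lemma coalition_determines_IA:
  assumes "is_IA n v" "is_IA n w" "y \<in> {1..n}" "coalition n y v = coalition n y w"
  shows "v = w"
proof -
  have n: "0 < n"
    using assms(1) by (rule is_IA_pos)
  let ?f = "\<lambda>a. res n (y + a)"
  have inj: "inj_on ?f {..<n}"
  proof (rule inj_onI)
    fix a b assume "a \<in> {..<n}" "b \<in> {..<n}" "?f a = ?f b"
    then show "a = b"
      by (auto simp: res_eq_iff[OF n] cong_add_lcancel_nat intro: cong_less_modulus_unique_nat)
  qed
  have offsets_less: "offset t ` {..<length t} \<subseteq> {..<n}" if "is_IA n t" for t
    using offset_less[OF that] by auto
  have "coalition n y t = ?f ` offset t ` {..<length t}" if "is_IA n t" for t
  proof -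
    have "t \<noteq> []"
      using that by (auto simp: is_IA_def)
    then show ?thesis
      using coalition_eq_image[OF assms(3)] by (simp add: image_image)
  qed
  then have "?f ` offset v ` {..<length v} = ?f ` offset w ` {..<length w}"
    using assms by simp
  then have "offset v ` {..<length v} = offset w ` {..<length w}"
    using inj_on_image_eq_iff[OF inj offsets_less[OF assms(1)] offsets_less[OF assms(2)]] by simp
  then show ?thesis
    using assms(1,2) by (intro offset_image_eq_imp_eq) (simp_all add: offset_length)
qed

lemma IA_equiv_iff_rotate:
  assumes "t \<noteq> []"
  shows "IA_equiv t u \<longleftrightarrow> (\<exists>k < length t. u = rotate k t)"
proof -
  have "k \<le> length t - 1 \<longleftrightarrow> k < length t" for k
    using assms by (cases t) auto
  moreover have "rotate k t = drop k t @ take k t" if "k < length t" for k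
    using that by (simp add: rotate_drop_take)
  ultimately show ?thesis
    unfolding IA_equiv_def by (metis length_rotate)
qed

lemma IA_equiv_imp_coalitions_eq:
  assumes "is_IA n t" "IA_equiv t u"
  shows "coalitions n t = coalitions n u"
proof -
  have "t \<noteq> []"
    using assms(1) by (auto simp: is_IA_def)
  then obtain k where "k < length t" "u = rotate k t"
    using assms(2) IA_equiv_iff_rotate by blast
  then show ?thesis
    using coalitions_rotate[OF assms(1)] by simp
qed

lemma coalitions_meet_imp_IA_equiv:
  assumes t: "is_IA n t" and u: "is_IA n u" and "coalitions n t \<inter> coalitions n u \<noteq> {}"
  shows "IA_equiv t u"
proof -
  obtain x y where xy: "x \<in> {1..n}" "y \<in> {1..n}" and same: "coalition n x t = coalition n y u"
    using assms(3) unfolding coalitions_def by blast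
  have "t \<noteq> []"
    using t by (auto simp: is_IA_def)
  moreover have "y \<in> coalition n x t"
    unfolding same by (simp add: coalition_def)
  ultimately obtain k where k: "k < length t" and y: "y = res n (x + offset t k)"
    using coalition_eq_image[OF xy(1)] by auto
  have "coalition n y (rotate k t) = coalition n y u"
    using coalition_rotate[OF t xy(1) k] same y by simp
  then have "rotate k t = u"
    using coalition_determines_IA[OF _ u xy(2)] t by simp
  then show ?thesis
    using IA_equiv_iff_rotate \<open>t \<noteq> []\<close> k by metis
qed

theorem theorem7:
  fixes n :: nat and t u :: "nat list"
  assumes "n \<ge> 1" and "is_IA n t" and "is_IA n u"
  shows "(coalitions n t \<inter> coalitions n u \<noteq> {} \<longleftrightarrow> IA_equiv t u)
       \<and> (coalitions n t = coalitions n u \<longleftrightarrow> IA_equiv t u)"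
proof -
  have "coalitions n t \<noteq> {}"
    using assms(1) by (auto simp: coalitions_eq_image)
  then show ?thesis
    using IA_equiv_imp_coalitions_eq[OF assms(2)] coalitions_meet_imp_IA_equiv[OF assms(2,3)] by auto
qed

end
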